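(* Let $H$ be an $r$-graph. Then $\mathrm{sd}\,\mathsf{B}_{\mathrm{edge}}(H)$ $S_r$-collapses onto its $S_r$-subcomplex $\Delta(i(P_{K_r^r,H}))$.
   Context: An $r$-graph $H$ consists of a vertex set $V(H)$ and a set $E(H)$ of $r$-element subsets of $V(H)$; an edge $\{v_1,\dots,v_r\}$ is written $v_1\cdots v_r$. $P_{K_r^r,H}$ is the poset of maps $f:\{1,\dots,r\}\to 2^{V(H)}\setminus\{\varnothing\}$ such that for every choice $x_j\in f(j)$ the $x_j$ are distinct and $x_1\cdots x_r\in E(H)$, ordered by $f\le g$ iff $f(j)\subseteq g(j)$ for all $j$; $S_r$ acts on it on the right by $f\sigma=f\circ\sigma$. $\mathsf{B}_{\mathrm{edge}}(H)$ is the simplicial complex whose vertices are tuples $(v_1,\dots,v_r)\in V(H)^r$ with $v_1\cdots v_r\in E(H)$ and whose simplices are the sets $F$ of such tuples with $\mathrm{pr}_1(F),\dots,\mathrm{pr}_r(F)$ pairwise disjoint and $x_1\cdots x_r\in E(H)$ for every choice $x_j\in\mathrm{pr}_j(F)$; $S_r$ acts on the right by $(v_1,\dots,v_r)\sigma=(v_{\sigma(1)},\dots,v_{\sigma(r)})$. $\mathcal F(\mathsf{B}_{\mathrm{edge}}(H))$ is its poset of nonempty simplices, $\Delta(P)$ denotes the order complex of a poset $P$ (simplices = chains), and $\mathrm{sd}\,\mathsf{B}_{\mathrm{edge}}(H)=\Delta(\mathcal F(\mathsf{B}_{\mathrm{edge}}(H)))$ with the induced $S_r$-action. The $S_r$-equivariant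 injective poset map $i:P_{K_r^r,H}\to\mathcal F(\mathsf{B}_{\mathrm{edge}}(H))$ is $i(\varphi)=\varphi(1)\times\cdots\times\varphi(r)$, so $\Delta(i(P_{K_r^r,H}))$ is an $S_r$-subcomplex of $\mathrm{sd}\,\mathsf{B}_{\mathrm{edge}}(H)$. For a simplicial $G$-complex $\mathsf K$: a facet is a maximal simplex; a simplex $\sigma$ is free if it is a proper face of exactly one facet $\varphi_\sigma$; a collection of free simplices is independently free if no two distinct members have a common coface. For free $\sigma$ with $\dim\varphi_\sigma=\dim\sigma+1$ and $\sigma G$ independently free, an elementary $G$-collapse replaces $\mathsf K$ by the subcomplex of simplices having no $\sigma g$ ($g\in G$) as a face. $\mathsf K$ $G$-collapses onto a $G$-subcomplex $\mathsf K'$ if a finite sequence of elementary $G$-collapses leads from $\mathsf K$ to $\mathsf K'$. *)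

theory Defs
  imports Main "HOL-Combinatorics.Permutations"
begin

definition facet :: "'v set set \<Rightarrow> 'v set \<Rightarrow> bool" where
  "facet K s \<longleftrightarrow> s \<in> K \<and> (\<forall>t\<in>K. s \<subseteq> t \<longrightarrow> t = s)"

definition free_with_facet :: "'v set set \<Rightarrow> 'v set \<Rightarrow> 'v set \<Rightarrow> bool" where
  "free_with_facet K s phi \<longleftrightarrow> s \<in> K \<and> facet K phi \<and> s \<subset> phi \<and>
     (\<forall>psi. facet K psi \<and> s \<subset> psi \<longrightarrow> psi = phi)"

definition free_simplex :: "'v set set \<Rightarrow> 'v set \<Rightarrow> bool" where
  "free_simplex K s \<longleftrightarrow> (\<exists>phi. free_with_facet K s phi)"

definition independently_free :: "'v set set \<Rightarrow> 'v set set \<Rightarrow> bool" where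
  "independently_free K S \<longleftrightarrow> (\<forall>s\<in>S. free_simplex K s) \<and>
     (\<forall>s\<in>S. \<forall>s'\<in>S. s \<noteq> s' \<longrightarrow> \<not> (\<exists>t\<in>K. s \<subseteq> t \<and> s' \<subseteq> t))"

definition simplex_orbit :: "'g set \<Rightarrow> ('g \<Rightarrow> 'v \<Rightarrow> 'v) \<Rightarrow> 'v set \<Rightarrow> 'v set set" where
  "simplex_orbit G act s = {act g ` s | g. g \<in> G}"

definition elementary_G_collapse ::
  "'g set \<Rightarrow> ('g \<Rightarrow> 'v \<Rightarrow> 'v) \<Rightarrow> 'v set set \<Rightarrow> 'v set set \<Rightarrow> bool" where
  "elementary_G_collapse G act K K' \<longleftrightarrow>
     (\<exists>s phi. free_with_facet K s phi \<and> card phi = card s + 1 \<and>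
        independently_free K (simplex_orbit G act s) \<and>
        K' = {t \<in> K. \<forall>g\<in>G. \<not> (act g ` s \<subseteq> t)})"

definition G_collapses ::
  "'g set \<Rightarrow> ('g \<Rightarrow> 'v \<Rightarrow> 'v) \<Rightarrow> 'v set set \<Rightarrow> 'v set set \<Rightarrow> bool" where
  "G_collapses G act K K' \<longleftrightarrow> (elementary_G_collapse G act)\<^sup>*\<^sup>* K K'"

definition order_complex :: "'p set \<Rightarrow> ('p \<Rightarrow> 'p \<Rightarrow> bool) \<Rightarrow> 'p set set" where
  "order_complex P le = {C. C \<noteq> {} \<and> finite C \<and> C \<subseteq> P \<and>
      (\<forall>x\<in>C. \<forall>y\<in>C. le x y \<or> le y x)}"

text \<open>Tuples (v_1,...,v_r) are lists of length r, indexed 0..r-1.  The symmetric group S_r is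
  the set of permutations of {0..<r}.\<close>

definition sym_group :: "nat \<Rightarrow> (nat \<Rightarrow> nat) set" where
  "sym_group r = {\<sigma>. \<sigma> permutes {..<r}}"

text \<open>Right action: (v_1,...,v_r) sigma = (v_sigma(1),...,v_sigma(r)).\<close>
definition tuple_act :: "nat \<Rightarrow> (nat \<Rightarrow> nat) \<Rightarrow> 'a list \<Rightarrow> 'a list" where
  "tuple_act r \<sigma> t = map (\<lambda>j. t ! \<sigma> j) [0..<r]"

definition edge_tuples :: "nat \<Rightarrow> 'a set \<Rightarrow> 'a set set \<Rightarrow> 'a list set" where
  "edge_tuples r V E = {t. length t = r \<and> set t \<subseteq> V \<and> set t \<in> E}"

definition pr :: "nat \<Rightarrow> 'a list set \<Rightarrow> 'a set" where
  "pr j F = (\<lambda>t. t ! j) ` F"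

text \<open>Nonempty simplices of B_edge(H) (= the face poset F(B_edge(H))).\<close>
definition B_edge :: "nat \<Rightarrow> 'a set \<Rightarrow> 'a set set \<Rightarrow> 'a list set set" where
  "B_edge r V E = {F. F \<noteq> {} \<and> finite F \<and> F \<subseteq> edge_tuples r V E \<and>
      (\<forall>j<r. \<forall>k<r. j \<noteq> k \<longrightarrow> pr j F \<inter> pr k F = {}) \<and>
      (\<forall>x. length x = r \<and> (\<forall>j<r. x ! j \<in> pr j F) \<longrightarrow> set x \<in> E)}"

definition sd_B_edge :: "nat \<Rightarrow> 'a set \<Rightarrow> 'a set set \<Rightarrow> 'a list set set set" where
  "sd_B_edge r V E = order_complex (B_edge r V E) (\<subseteq>)"

definition sd_act :: "nat \<Rightarrow> (nat \<Rightarrow> nat) \<Rightarrow> 'a list set \<Rightarrow> 'a list set" where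
  "sd_act r \<sigma> F = tuple_act r \<sigma> ` F"

text \<open>The poset P_{K_r^r,H}: maps f from {1..r} (here indices 0..r-1, f given as a list of
  length r) to nonempty subsets of V such that every choice x_j in f(j) consists of distinct
  vertices forming an edge; ordered componentwise by inclusion.\<close>
definition P_KH :: "nat \<Rightarrow> 'a set \<Rightarrow> 'a set set \<Rightarrow> 'a set list set" where
  "P_KH r V E = {f. length f = r \<and> (\<forall>j<r. f ! j \<noteq> {} \<and> f ! j \<subseteq> V) \<and>
      (\<forall>x. length x = r \<and> (\<forall>j<r. x ! j \<in> f ! j) \<longrightarrow> distinct x \<and> set x \<in> E)}"

definition i_map :: "nat \<Rightarrow> 'a set list \<Rightarrow> 'a list set" where
  "i_map r \<phi> = {x. length x = r \<and> (\<forall>j<r. x ! j \<in> \<phi> ! j)}"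

end

theory Submission
  imports Defs "HOL-Library.Product_Lexorder"
begin

text \<open>For a simplex \<open>F\<close> of \<open>B_edge(H)\<close> put \<open>c F = pr\<^sub>1 F \<times> \<dots> \<times> pr\<^sub>r F\<close>. This is an
  \<open>S\<^sub>r\<close>-equivariant closure operator on the face poset whose closed elements are exactly the
  simplices \<open>i(\<phi>)\<close>, \<open>\<phi> \<in> P_{K_r^r,H}\<close>. In general, an equivariant closure operator \<open>c\<close> on a finite
  poset lets the order complex collapse onto the chains of closed elements: a chain \<open>\<sigma>\<close> whose
  largest non-closed element \<open>x\<close> satisfies \<open>c x \<notin> \<sigma>\<close> is a free face of \<open>\<sigma> \<union> {c x}\<close>, once all such
  pairs of larger rank \<open>(|x|, |\<sigma>|)\<close> have been removed. The pairs are removed orbitwise; distinct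
  members of an orbit have no common coface because \<open>S\<^sub>r\<close> acts freely on the simplices of
  \<open>B_edge(H)\<close>, whose coordinate projections are pairwise disjoint.\<close>

section \<open>Collapsing a poset with an equivariant closure operator\<close>

locale equivariant_closure =
  fixes P :: "'b set set" and c :: "'b set \<Rightarrow> 'b set"
    and G :: "'g set" and act :: "'g \<Rightarrow> 'b set \<Rightarrow> 'b set"
  assumes finite_P: "finite P" and finite_elem: "x \<in> P \<Longrightarrow> finite x"
    and c_in: "x \<in> P \<Longrightarrow> c x \<in> P"
    and c_ext: "x \<in> P \<Longrightarrow> x \<subseteq> c x"
    and c_idem: "x \<in> P \<Longrightarrow> c (c x) = c x"
    and c_mono: "x \<in> P \<Longrightarrow> y \<in> P \<Longrightarrow> x \<subseteq> y \<Longrightarrow> c x \<subseteq> c y"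
    and act_in: "g \<in> G \<Longrightarrow> x \<in> P \<Longrightarrow> act g x \<in> P"
    and card_act: "g \<in> G \<Longrightarrow> x \<in> P \<Longrightarrow> card (act g x) = card x"
    and act_mono: "g \<in> G \<Longrightarrow> x \<in> P \<Longrightarrow> y \<in> P \<Longrightarrow> x \<subseteq> y \<Longrightarrow> act g x \<subseteq> act g y"
    and inj_on_act: "g \<in> G \<Longrightarrow> inj_on (act g) P"
    and c_act: "g \<in> G \<Longrightarrow> x \<in> P \<Longrightarrow> c (act g x) = act g (c x)"
    and act_compose: "g \<in> G \<Longrightarrow> h \<in> G \<Longrightarrow> \<exists>k\<in>G. \<forall>x\<in>P. act h (act g x) = act k x"
    and act_inverse: "g \<in> G \<Longrightarrow> \<exists>h\<in>G. \<forall>x\<in>P. act h (act g x) = x"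
    and act_identity: "\<exists>e\<in>G. \<forall>x\<in>P. act e x = x"
    and act_free: "g \<in> G \<Longrightarrow> h \<in> G \<Longrightarrow> x \<in> P \<Longrightarrow> act g x = act h x \<Longrightarrow> \<forall>y\<in>P. act g y = act h y"
begin

abbreviation chains :: "'b set set set" where
  "chains \<equiv> order_complex P (\<subseteq>)"

definition non_closed :: "'b set \<Rightarrow> bool" where
  "non_closed x \<longleftrightarrow> c x \<noteq> x"

definition top_non_closed :: "'b set set \<Rightarrow> 'b set" where
  "top_non_closed s = (THE x. x \<in> s \<and> non_closed x \<and> (\<forall>y\<in>s. non_closed y \<longrightarrow> y \<subseteq> x))"

definition partner :: "'b set set \<Rightarrow> 'b set set" where
  "partner s = insert (c (top_non_closed s)) s"

definition matched :: "'b set set \<Rightarrow> bool" where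
  "matched s \<longleftrightarrow> s \<in> chains \<and> (\<exists>x\<in>s. non_closed x) \<and> c (top_non_closed s) \<notin> s"

definition rank :: "'b set set \<Rightarrow> nat \<times> nat" where
  "rank s = (card (top_non_closed s), card s)"

definition avoiding :: "'b set set set \<Rightarrow> 'b set set set" where
  "avoiding R = {t \<in> chains. \<forall>p\<in>R. \<not> p \<subseteq> t}"

definition invariant :: "'b set set set \<Rightarrow> bool" where
  "invariant R \<longleftrightarrow> (\<forall>p\<in>R. \<forall>g\<in>G. act g ` p \<in> R)"

definition rank_upward_closed :: "'b set set set \<Rightarrow> bool" where
  "rank_upward_closed R \<longleftrightarrow> (\<forall>p\<in>R. \<forall>q. matched q \<and> rank p < rank q \<longrightarrow> q \<in> R)"

lemma chains_iff:
  "s \<in> chains \<longleftrightarrow> s \<noteq> {} \<and> finite s \<and> s \<subseteq> P \<and> (\<forall>x\<in>s. \<forall>y\<in>s. x \<subseteq> y \<or> y \<subseteq> x)"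
  by (simp add: order_complex_def)

lemma chains_subset: "t \<in> chains \<Longrightarrow> p \<subseteq> t \<Longrightarrow> p \<noteq> {} \<Longrightarrow> p \<in> chains"
  unfolding chains_iff by (blast intro: finite_subset)

lemma subset_card_le_eq: "x \<in> P \<Longrightarrow> y \<subseteq> x \<Longrightarrow> card x \<le> card y \<Longrightarrow> y = x"
  by (rule card_seteq[OF finite_elem])

lemma not_non_closed_c: "x \<in> P \<Longrightarrow> \<not> non_closed (c x)"
  by (simp add: non_closed_def c_idem)

lemma top_non_closed_eq:
  assumes "x \<in> s" "non_closed x" "\<forall>y\<in>s. non_closed y \<longrightarrow> y \<subseteq> x"
  shows "top_non_closed s = x"
  unfolding top_non_closed_def using assms by (intro the_equality) auto

lemma top_non_closed_exists:
  assumes "s \<in> chains" "\<exists>x\<in>s. non_closed x"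
  shows "\<exists>x. x \<in> s \<and> non_closed x \<and> (\<forall>y\<in>s. non_closed y \<longrightarrow> y \<subseteq> x)"
proof -
  let ?A = "{x\<in>s. non_closed x}"
  have A: "finite ?A" "?A \<noteq> {}" using assms by (auto simp: chains_iff)
  obtain x where x: "x \<in> ?A" and x_max: "\<forall>y\<in>?A. card y \<le> card x"
    using Max_in[of "card ` ?A"] Max_ge[of "card ` ?A"] A by fastforce
  have "y \<subseteq> x" if "y \<in> ?A" for y
  proof -
    have "x \<subseteq> y \<or> y \<subseteq> x" "y \<in> P" using x that assms(1) by (auto simp: chains_iff)
    then show ?thesis using subset_card_le_eq x_max that by blast
  qed
  then show ?thesis using x by auto
qed

lemma top_non_closedD:
  assumes "s \<in> chains" "\<exists>x\<in>s. non_closed x"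
  shows "top_non_closed s \<in> s" "non_closed (top_non_closed s)"
    "\<And>y. y \<in> s \<Longrightarrow> non_closed y \<Longrightarrow> y \<subseteq> top_non_closed s"
  using top_non_closed_exists[OF assms] top_non_closed_eq by metis+

lemma matchedD:
  assumes "matched s"
  shows "s \<in> chains" "finite s" "s \<subseteq> P" "top_non_closed s \<in> s" "top_non_closed s \<in> P"
    "non_closed (top_non_closed s)" "\<And>y. y \<in> s \<Longrightarrow> non_closed y \<Longrightarrow> y \<subseteq> top_non_closed s"
    "c (top_non_closed s) \<notin> s"
  using assms top_non_closedD[of s] by (auto simp: matched_def chains_iff)

definition next_matched :: "'b set set set \<Rightarrow> 'b set set \<Rightarrow> bool" where
  "next_matched R s \<longleftrightarrow> matched s \<and> s \<notin> R \<and> (\<forall>p\<in>R. rank s \<le> rank p)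
     \<and> (\<forall>p. matched p \<and> rank s < rank p \<longrightarrow> p \<in> R)"

text \<open>An element \<open>y \<in> t\<close> outside \<open>partner s\<close> would give a matched subchain of \<open>t\<close> of larger
  rank: \<open>(s \<union> {y}) - {c y}\<close> if \<open>y\<close> is non-closed and contains \<open>top_non_closed s\<close>, else \<open>s \<union> {y}\<close>.\<close>
lemma cofaces_of_matched:
  assumes s: "matched s" and above: "\<forall>p. matched p \<and> rank s < rank p \<longrightarrow> p \<in> R"
    and t: "t \<in> avoiding R" and "s \<subseteq> t"
  shows "t \<subseteq> partner s"
proof
  fix y assume "y \<in> t"
  show "y \<in> partner s"
  proof (rule ccontr)
    assume y_new: "y \<notin> partner s"
    define x where "x = top_non_closed s"
    note x = matchedD[OF s, folded x_def]
    have t_chain: "t \<in> chains" and t_avoids: "\<forall>p\<in>R. \<not> p \<subseteq> t" using t by (auto simp: avoiding_def)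
    have "y \<in> P" and comparable: "x \<subseteq> y \<or> y \<subseteq> x"
      using t_chain \<open>y \<in> t\<close> x(4) \<open>s \<subseteq> t\<close> unfolding chains_iff by blast+
    obtain p where "p \<subseteq> t" "p \<noteq> {}" "matched p" "rank s < rank p"
    proof (cases "non_closed y \<and> x \<subseteq> y")
      case True
      define p where "p = insert y s - {c y}"
      have "y \<in> p" using True by (auto simp: p_def non_closed_def)
      have "p \<subseteq> t" using \<open>y \<in> t\<close> \<open>s \<subseteq> t\<close> by (auto simp: p_def)
      have top: "top_non_closed p = y"
        by (rule top_non_closed_eq) (use \<open>y \<in> p\<close> True x in \<open>auto simp: p_def\<close>)
      then have "matched p"
        using chains_subset[OF t_chain \<open>p \<subseteq> t\<close>] \<open>y \<in> p\<close> True by (auto simp: matched_def p_def)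
      have "x \<noteq> y" using y_new x(4) by (auto simp: partner_def)
      then have "card x < card y" using True finite_elem[OF \<open>y \<in> P\<close>] by (intro psubset_card_mono) auto
      then have "rank s < rank p" by (simp add: rank_def top x_def)
      then show thesis using that \<open>p \<subseteq> t\<close> \<open>y \<in> p\<close> \<open>matched p\<close> by blast
    next
      case False
      define p where "p = insert y s"
      have "p \<subseteq> t" using \<open>y \<in> t\<close> \<open>s \<subseteq> t\<close> by (auto simp: p_def)
      have top: "top_non_closed p = x"
        by (rule top_non_closed_eq) (use False x comparable in \<open>auto simp: p_def\<close>)
      have "matched p" using chains_subset[OF t_chain \<open>p \<subseteq> t\<close>] x top y_new
        by (auto simp: matched_def p_def partner_def x_def)
      have "card p = card s + 1" using x(2) y_new by (simp add: p_def partner_def)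
      then have "rank s < rank p" by (simp add: rank_def top x_def)
      then show thesis using that[of p] \<open>p \<subseteq> t\<close> \<open>matched p\<close> by (simp add: p_def)
    qed
    then show False using above t_avoids by blast
  qed
qed

lemma matched_in_avoiding:
  assumes "next_matched R s" and R: "\<forall>p\<in>R. matched p"
  shows "s \<in> avoiding R"
proof -
  have s: "matched s" "s \<notin> R" "\<forall>p\<in>R. rank s \<le> rank p"
    using assms(1) by (auto simp: next_matched_def)
  note x = matchedD[OF s(1)]
  have "\<not> p \<subseteq> s" if "p \<in> R" for p
  proof
    assume "p \<subseteq> s"
    note y = matchedD[OF R[rule_format, OF \<open>p \<in> R\<close>]]
    have sub: "top_non_closed p \<subseteq> top_non_closed s" using x(7) y(4,6) \<open>p \<subseteq> s\<close> by blast
    have le: "rank s \<le> rank p" using s(3) that by auto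
    then have "card (top_non_closed s) \<le> card (top_non_closed p)"
      using card_mono[OF finite_elem[OF x(5)] sub] by (auto simp: rank_def)
    then have "top_non_closed p = top_non_closed s" using subset_card_le_eq[OF x(5) sub] by simp
    then have "card s \<le> card p" using le by (auto simp: rank_def)
    then have "p = s" using card_seteq[OF x(2) \<open>p \<subseteq> s\<close>] by simp
    then show False using s(2) that by simp
  qed
  then show ?thesis using x(1) by (auto simp: avoiding_def)
qed

lemma partner_in_chains:
  assumes "matched s"
  shows "partner s \<in> chains"
proof -
  define x where "x = top_non_closed s"
  note x = matchedD[OF assms, folded x_def]
  have "z \<subseteq> c x \<or> c x \<subseteq> z" if "z \<in> s" for z
  proof (cases "non_closed z")
    case True
    then show ?thesis using x that c_ext[OF x(5)] by blast
  next
    case False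
    have "z \<in> P" "x \<subseteq> z \<or> z \<subseteq> x" using x(1,4) that unfolding chains_iff by blast+
    then show ?thesis using False c_mono[OF x(5)] c_ext[OF x(5)] by (auto simp: non_closed_def)
  qed
  then show ?thesis using x(1) c_in[OF x(5)] by (auto simp: chains_iff partner_def x_def)
qed

lemma partner_in_avoiding:
  assumes "next_matched R s" and R: "\<forall>p\<in>R. matched p"
  shows "partner s \<in> avoiding R"
proof -
  have s: "matched s" "\<forall>p\<in>R. rank s \<le> rank p" using assms(1) by (auto simp: next_matched_def)
  define x where "x = top_non_closed s"
  note x = matchedD[OF s(1), folded x_def]
  have "\<not> p \<subseteq> partner s" if "p \<in> R" for p
  proof
    assume p_sub: "p \<subseteq> partner s"
    note y = matchedD[OF R[rule_format, OF \<open>p \<in> R\<close>]]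
    have "top_non_closed p \<noteq> c x" using y(6) not_non_closed_c[OF x(5)] by auto
    then have "top_non_closed p \<in> s" using y(4) p_sub by (auto simp: partner_def x_def)
    then have sub: "top_non_closed p \<subseteq> x" using x y by auto
    have "card x \<le> card (top_non_closed p)"
      using s(2) that card_mono[OF finite_elem[OF x(5)] sub] by (auto simp: rank_def x_def)
    then have "top_non_closed p = x" using subset_card_le_eq[OF x(5) sub] by simp
    then have "p \<subseteq> s" using p_sub y(8) by (auto simp: partner_def x_def)
    then show False using matched_in_avoiding[OF assms] that by (auto simp: avoiding_def)
  qed
  then show ?thesis using partner_in_chains[OF s(1)] by (auto simp: avoiding_def)
qed

lemma free_with_partner:
  assumes "next_matched R s" and R: "\<forall>p\<in>R. matched p"
  shows "free_with_facet (avoiding R) s (partner s)"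
proof -
  have s: "matched s" "\<forall>p. matched p \<and> rank s < rank p \<longrightarrow> p \<in> R"
    using assms(1) by (auto simp: next_matched_def)
  have cofaces: "t \<subseteq> partner s" if "t \<in> avoiding R" "s \<subseteq> t" for t
    using cofaces_of_matched[OF s that] .
  have "facet (avoiding R) (partner s)"
    unfolding facet_def using partner_in_avoiding[OF assms] cofaces by (auto simp: partner_def)
  then show ?thesis unfolding free_with_facet_def
    using matched_in_avoiding[OF assms] cofaces matchedD(8)[OF s(1)]
    by (auto simp: facet_def partner_def)
qed


lemma act_image_in_chains: assumes g: "g \<in> G" and s: "s \<in> chains" shows "act g ` s \<in> chains"
proof -
  have "s \<subseteq> P" and comparable: "\<forall>x\<in>s. \<forall>y\<in>s. x \<subseteq> y \<or> y \<subseteq> x" using s by (auto simp: chains_iff)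
  have "\<forall>x\<in>act g ` s. \<forall>y\<in>act g ` s. x \<subseteq> y \<or> y \<subseteq> x"
  proof (intro ballI)
    fix a b assume "a \<in> act g ` s" "b \<in> act g ` s"
    then obtain x y where xy: "x \<in> s" "y \<in> s" and "a = act g x" "b = act g y" by auto
    moreover have "x \<in> P" "y \<in> P" using xy \<open>s \<subseteq> P\<close> by auto
    ultimately show "a \<subseteq> b \<or> b \<subseteq> a" using comparable xy act_mono[OF g] by metis
  qed
  then show ?thesis using s \<open>s \<subseteq> P\<close> act_in[OF g] by (auto simp: chains_iff)
qed

lemma non_closed_act: assumes "g \<in> G" "x \<in> P" shows "non_closed (act g x) \<longleftrightarrow> non_closed x"
proof -
  have "act g (c x) = act g x \<longleftrightarrow> c x = x"
    using inj_on_act[OF assms(1)] c_in[OF assms(2)] assms(2) by (auto dest: inj_onD)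
  then show ?thesis by (simp add: non_closed_def c_act[OF assms])
qed

lemma top_non_closed_act:
  assumes g: "g \<in> G" and s: "s \<in> chains" "\<exists>x\<in>s. non_closed x"
  shows "top_non_closed (act g ` s) = act g (top_non_closed s)"
proof (rule top_non_closed_eq)
  have "s \<subseteq> P" using s by (auto simp: chains_iff)
  note x = top_non_closedD[OF s]
  show "act g (top_non_closed s) \<in> act g ` s" using x by auto
  show "non_closed (act g (top_non_closed s))" using x \<open>s \<subseteq> P\<close> non_closed_act[OF g] by auto
  show "\<forall>y\<in>act g ` s. non_closed y \<longrightarrow> y \<subseteq> act g (top_non_closed s)"
  proof (intro ballI impI)
    fix y assume "y \<in> act g ` s" "non_closed y"
    then obtain z where z: "z \<in> s" "y = act g z" by auto
    then have "z \<subseteq> top_non_closed s"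
      using x(3) \<open>non_closed y\<close> non_closed_act[OF g] \<open>s \<subseteq> P\<close> by auto
    then show "y \<subseteq> act g (top_non_closed s)" using act_mono[OF g] z x(1) \<open>s \<subseteq> P\<close> by auto
  qed
qed

lemma matched_act:
  assumes g: "g \<in> G" and s: "matched s"
  shows "matched (act g ` s)" "rank (act g ` s) = rank s"
proof -
  note x = matchedD[OF s]
  have top: "top_non_closed (act g ` s) = act g (top_non_closed s)"
    using top_non_closed_act[OF g x(1)] x(4,6) by blast
  have "act g (c (top_non_closed s)) \<notin> act g ` s"
    using inj_onD[OF inj_on_act[OF g]] c_in[OF x(5)] x(3,8) by blast
  then show "matched (act g ` s)"
    using act_image_in_chains[OF g x(1)] x(3,4,6) non_closed_act[OF g] top c_act[OF g x(5)]
    by (auto simp: matched_def)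
  have "card (act g ` s) = card s" using card_image[OF inj_on_subset[OF inj_on_act[OF g] x(3)]] .
  then show "rank (act g ` s) = rank s" using top card_act[OF g x(5)] by (simp add: rank_def)
qed

lemma act_image_identity: assumes "s \<subseteq> P" shows "\<exists>e\<in>G. act e ` s = s"
proof -
  obtain e where "e \<in> G" "\<forall>x\<in>P. act e x = x" using act_identity by blast
  then show ?thesis using assms by (intro bexI[of _ e]) (auto simp: subset_iff image_iff)
qed

lemma act_image_inverse: assumes "g \<in> G" "s \<subseteq> P" shows "\<exists>h\<in>G. act h ` act g ` s = s"
proof -
  obtain h where "h \<in> G" "\<forall>x\<in>P. act h (act g x) = x" using act_inverse[OF assms(1)] by blast
  then show ?thesis using assms(2) by (intro bexI[of _ h]) (auto simp: subset_iff image_iff)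
qed

lemma act_image_compose:
  assumes "g \<in> G" "h \<in> G" "s \<subseteq> P" shows "\<exists>k\<in>G. act h ` act g ` s = act k ` s"
proof -
  obtain k where "k \<in> G" "\<forall>x\<in>P. act h (act g x) = act k x" using act_compose[OF assms(1,2)] by blast
  then show ?thesis using assms(3) by (intro bexI[of _ k]) (auto simp: subset_iff image_iff)
qed

lemma next_matched_act:
  assumes "next_matched R s" and "invariant R" and g: "g \<in> G"
  shows "next_matched R (act g ` s)"
proof -
  have s: "matched s" "s \<notin> R" using assms(1) by (auto simp: next_matched_def)
  have "act g ` s \<notin> R"
    using act_image_inverse[OF g matchedD(3)[OF s(1)]] s(2) assms(2) by (metis invariant_def)
  then show ?thesis using assms(1) matched_act[OF g s(1)] by (simp add: next_matched_def)
qed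

text \<open>Two translates of \<open>s\<close> in a common coface both lie in \<open>partner (act g ` s)\<close>, so their top
  non-closed elements coincide, and freeness of the action applies.\<close>
lemma orbit_no_common_coface:
  assumes "next_matched R s" and g: "g \<in> G" and h: "h \<in> G"
    and t: "t \<in> avoiding R" "act g ` s \<subseteq> t" "act h ` s \<subseteq> t"
  shows "act g ` s = act h ` s"
proof -
  have s: "matched s" using assms(1) by (auto simp: next_matched_def)
  note x = matchedD[OF s]
  have gs: "matched (act g ` s)" and above: "\<forall>p. matched p \<and> rank (act g ` s) < rank p \<longrightarrow> p \<in> R"
    using assms(1) matched_act[OF g s] by (auto simp: next_matched_def)
  note y = matchedD[OF gs]
  have top_g: "top_non_closed (act g ` s) = act g (top_non_closed s)"
    using top_non_closed_act[OF g x(1)] x(4,6) by blast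
  have nc_h: "non_closed (act h (top_non_closed s))" using non_closed_act[OF h x(5)] x(6) by simp
  then have "act h (top_non_closed s) \<noteq> c (top_non_closed (act g ` s))"
    using not_non_closed_c[OF y(5)] by auto
  moreover have "act h (top_non_closed s) \<in> partner (act g ` s)"
    using cofaces_of_matched[OF gs above t(1,2)] t(3) x(4) by auto
  ultimately have "act h (top_non_closed s) \<in> act g ` s" by (simp add: partner_def)
  then have "act h (top_non_closed s) \<subseteq> act g (top_non_closed s)" using y(7) nc_h top_g by auto
  moreover have "card (act g (top_non_closed s)) \<le> card (act h (top_non_closed s))"
    using card_act[OF g x(5)] card_act[OF h x(5)] by simp
  ultimately have "act h (top_non_closed s) = act g (top_non_closed s)"
    using subset_card_le_eq[OF act_in[OF g x(5)]] by blast
  then have "\<forall>y\<in>P. act g y = act h y" using act_free[OF g h x(5)] by simp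
  then show ?thesis using x(3) by (auto intro!: image_cong)
qed

lemma elementary_collapse_orbit:
  assumes "next_matched R s" and R: "\<forall>p\<in>R. matched p" "invariant R"
  shows "elementary_G_collapse G act (avoiding R) (avoiding (R \<union> simplex_orbit G act s))"
proof -
  have s: "matched s" using assms(1) by (auto simp: next_matched_def)
  have free: "free_simplex (avoiding R) (act g ` s)" if "g \<in> G" for g
    using free_with_partner[OF next_matched_act[OF assms(1) R(2) that] R(1)]
    unfolding free_simplex_def by blast
  have "independently_free (avoiding R) (simplex_orbit G act s)"
    unfolding independently_free_def
  proof (intro conjI ballI impI)
    fix s1 assume "s1 \<in> simplex_orbit G act s"
    then show "free_simplex (avoiding R) s1" using free by (auto simp: simplex_orbit_def)
  next
    fix s1 s2 assume "s1 \<in> simplex_orbit G act s" "s2 \<in> simplex_orbit G act s" "s1 \<noteq> s2"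
    moreover obtain g h where "g \<in> G" "h \<in> G" "s1 = act g ` s" "s2 = act h ` s"
      using calculation(1,2) unfolding simplex_orbit_def by blast
    ultimately show "\<not> (\<exists>t\<in>avoiding R. s1 \<subseteq> t \<and> s2 \<subseteq> t)"
      using orbit_no_common_coface[OF assms(1) \<open>g \<in> G\<close> \<open>h \<in> G\<close>] by auto
  qed
  moreover have "card (partner s) = card s + 1"
    using matchedD(2,8)[OF s] by (simp add: partner_def)
  moreover have "avoiding (R \<union> simplex_orbit G act s) = {t \<in> avoiding R. \<forall>g\<in>G. \<not> act g ` s \<subseteq> t}"
    unfolding avoiding_def simplex_orbit_def by blast
  ultimately show ?thesis unfolding elementary_G_collapse_def
    using free_with_partner[OF assms(1) R(1)] by (intro exI[of _ s] exI[of _ "partner s"]) simp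
qed


lemma invariant_union_orbit:
  assumes R: "invariant R" and "s \<subseteq> P" shows "invariant (R \<union> simplex_orbit G act s)"
  unfolding invariant_def
proof (intro ballI)
  fix p g assume p: "p \<in> R \<union> simplex_orbit G act s" and g: "g \<in> G"
  show "act g ` p \<in> R \<union> simplex_orbit G act s"
  proof (cases "p \<in> R")
    case True
    then show ?thesis using R g by (simp add: invariant_def)
  next
    case False
    then obtain h where "h \<in> G" "p = act h ` s" using p by (auto simp: simplex_orbit_def)
    then obtain k where "k \<in> G" "act g ` p = act k ` s" using act_image_compose[OF _ g \<open>s \<subseteq> P\<close>] by blast
    then show ?thesis by (auto simp: simplex_orbit_def)
  qed
qed

lemma rank_upward_closed_union_orbit:
  assumes s: "next_matched R s" and R: "rank_upward_closed R"
  shows "rank_upward_closed (R \<union> simplex_orbit G act s)"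
  unfolding rank_upward_closed_def
proof (intro ballI allI impI)
  fix p q assume p: "p \<in> R \<union> simplex_orbit G act s" and q: "matched q \<and> rank p < rank q"
  show "q \<in> R \<union> simplex_orbit G act s"
  proof (cases "p \<in> R")
    case True
    then show ?thesis using R q by (simp add: rank_upward_closed_def)
  next
    case False
    then obtain h where "h \<in> G" "p = act h ` s" using p by (auto simp: simplex_orbit_def)
    then have "rank p = rank s" using matched_act(2) s by (simp add: next_matched_def)
    then show ?thesis using s q by (simp add: next_matched_def)
  qed
qed

lemma finite_matched: "finite (Collect matched)"
  by (rule finite_subset[of _ "Pow P"]) (use finite_P matchedD(3) in auto)

lemma next_matched_exists:
  assumes "R \<subseteq> Collect matched" and R: "rank_upward_closed R" and "Collect matched - R \<noteq> {}"
  obtains s where "next_matched R s"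
proof -
  let ?U = "Collect matched - R"
  have "finite ?U" using finite_matched by simp
  then have "Max (rank ` ?U) \<in> rank ` ?U" using assms(3) by (intro Max_in) auto
  then obtain s where s: "s \<in> ?U" "rank s = Max (rank ` ?U)" by auto
  have s_max: "rank p \<le> rank s" if "p \<in> ?U" for p
    unfolding s(2) using \<open>finite ?U\<close> that by (intro Max_ge) auto
  have "rank s \<le> rank p" if "p \<in> R" for p
  proof (rule ccontr)
    assume "\<not> rank s \<le> rank p"
    then have "s \<in> R" using R that s(1) by (auto simp: rank_upward_closed_def)
    then show False using s(1) by simp
  qed
  moreover have "p \<in> R" if "matched p" "rank s < rank p" for p
    using s_max[of p] that by fastforce
  ultimately have "next_matched R s" using s(1) by (simp add: next_matched_def)
  then show thesis using that by blast
qed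

lemma collapses_to_avoiding_matched:
  assumes "R \<subseteq> Collect matched" "invariant R" "rank_upward_closed R"
  shows "G_collapses G act (avoiding R) (avoiding (Collect matched))"
  using assms
proof (induction "card (Collect matched - R)" arbitrary: R rule: less_induct)
  case less
  show ?case
  proof (cases "Collect matched - R = {}")
    case True
    then show ?thesis using less.prems(1) by (simp add: G_collapses_def Diff_eq_empty_iff subset_antisym)
  next
    case False
    then obtain s where s: "next_matched R s" using next_matched_exists less.prems by blast
    then have "matched s" "s \<notin> R" by (auto simp: next_matched_def)
    define R' where "R' = R \<union> simplex_orbit G act s"
    have step: "elementary_G_collapse G act (avoiding R) (avoiding R')"
      unfolding R'_def using elementary_collapse_orbit[OF s] less.prems by blast
    have "R' \<subseteq> Collect matched"
      using less.prems(1) matched_act(1)[OF _ \<open>matched s\<close>] by (auto simp: R'_def simplex_orbit_def)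
    moreover have "invariant R'"
      unfolding R'_def by (rule invariant_union_orbit[OF less.prems(2) matchedD(3)[OF \<open>matched s\<close>]])
    moreover have "rank_upward_closed R'"
      unfolding R'_def by (rule rank_upward_closed_union_orbit[OF s less.prems(3)])
    moreover have "s \<in> R'"
      using act_image_identity[OF matchedD(3)[OF \<open>matched s\<close>]] by (auto simp: R'_def simplex_orbit_def)
    then have "card (Collect matched - R') < card (Collect matched - R)"
      using finite_matched \<open>matched s\<close> \<open>s \<notin> R\<close> by (intro psubset_card_mono) (auto simp: R'_def)
    ultimately have "G_collapses G act (avoiding R') (avoiding (Collect matched))"
      using less.hyps by blast
    then show ?thesis using step unfolding G_collapses_def by (rule converse_rtranclp_into_rtranclp[rotated])
  qed
qed

text \<open>A chain with a non-closed element contains a matched chain: remove \<open>c x\<close> for its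
  top non-closed element \<open>x\<close>.\<close>
lemma avoiding_matched_eq: "avoiding (Collect matched) = order_complex (c ` P) (\<subseteq>)"
proof (intro equalityI subsetI)
  fix t assume t: "t \<in> avoiding (Collect matched)"
  then have "t \<in> chains" by (simp add: avoiding_def)
  have "\<not> non_closed y" if "y \<in> t" for y
  proof
    assume "non_closed y"
    then have "\<exists>y\<in>t. non_closed y" using that by blast
    note x = top_non_closedD[OF \<open>t \<in> chains\<close> this]
    define p where "p = t - {c (top_non_closed t)}"
    have "top_non_closed t \<in> p" using x(1,2) by (auto simp: p_def non_closed_def)
    moreover have "top_non_closed p = top_non_closed t"
      by (rule top_non_closed_eq) (use x \<open>top_non_closed t \<in> p\<close> in \<open>auto simp: p_def\<close>)
    ultimately have "matched p"
      using chains_subset[OF \<open>t \<in> chains\<close>, of p] x(2) by (auto simp: matched_def p_def)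
    then show False using t by (auto simp: avoiding_def p_def)
  qed
  moreover have "t \<subseteq> P" using \<open>t \<in> chains\<close> by (simp add: chains_iff)
  ultimately have "t \<subseteq> c ` P" unfolding non_closed_def by (metis image_eqI subsetD subsetI)
  then show "t \<in> order_complex (c ` P) (\<subseteq>)" using \<open>t \<in> chains\<close> by (auto simp: chains_iff order_complex_def)
next
  fix t assume t: "t \<in> order_complex (c ` P) (\<subseteq>)"
  then have "t \<in> chains" using c_in unfolding order_complex_def by blast
  moreover have "\<not> p \<subseteq> t" if "matched p" for p
  proof
    assume "p \<subseteq> t"
    then have "top_non_closed p \<in> c ` P" using matchedD(4)[OF that] t by (auto simp: order_complex_def)
    then show False using matchedD(6)[OF that] not_non_closed_c by auto
  qed
  ultimately show "t \<in> avoiding (Collect matched)" by (auto simp: avoiding_def)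
qed

theorem collapses_onto_closed_chains: "G_collapses G act chains (order_complex (c ` P) (\<subseteq>))"
proof -
  have "G_collapses G act (avoiding {}) (avoiding (Collect matched))"
    by (rule collapses_to_avoiding_matched) (auto simp: invariant_def rank_upward_closed_def)
  moreover have "avoiding {} = chains" by (simp add: avoiding_def)
  ultimately show ?thesis by (simp add: avoiding_matched_eq)
qed

end

section \<open>The product closure on the simplices of \<open>B_edge(H)\<close>\<close>

definition proj_product :: "nat \<Rightarrow> 'a list set \<Rightarrow> 'a list set" where
  "proj_product r F = {x. length x = r \<and> (\<forall>j<r. x ! j \<in> pr j F)}"

lemma B_edge_iff:
  "F \<in> B_edge r V E \<longleftrightarrow> F \<noteq> {} \<and> finite F \<and> F \<subseteq> edge_tuples r V E \<and>
     (\<forall>j<r. \<forall>k<r. j \<noteq> k \<longrightarrow> pr j F \<inter> pr k F = {}) \<and> (\<forall>x\<in>proj_product r F. set x \<in> E)"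
  by (auto simp: B_edge_def proj_product_def)

lemma B_edgeD:
  assumes "F \<in> B_edge r V E"
  shows "F \<noteq> {}" "finite F" "\<And>t. t \<in> F \<Longrightarrow> length t = r \<and> set t \<subseteq> V \<and> set t \<in> E"
    "\<And>j k. j < r \<Longrightarrow> k < r \<Longrightarrow> j \<noteq> k \<Longrightarrow> pr j F \<inter> pr k F = {}"
    "\<And>x. x \<in> proj_product r F \<Longrightarrow> set x \<in> E"
  using assms by (auto simp: B_edge_iff edge_tuples_def)

lemma nth_tuple_act: "j < r \<Longrightarrow> tuple_act r g t ! j = t ! g j"
  by (simp add: tuple_act_def)

lemma length_tuple_act [simp]: "length (tuple_act r g t) = r"
  by (simp add: tuple_act_def)

lemma permutes_lessThan_less: "g permutes {..<r} \<Longrightarrow> j < r \<Longrightarrow> g j < r"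
  using permutes_in_image by fastforce

lemma tuple_act_compose:
  "h permutes {..<r} \<Longrightarrow> tuple_act r h (tuple_act r g t) = tuple_act r (g \<circ> h) t"
  by (rule nth_equalityI) (auto simp: nth_tuple_act permutes_lessThan_less)

lemma tuple_act_id: "length t = r \<Longrightarrow> tuple_act r id t = t"
  by (rule nth_equalityI) (auto simp: nth_tuple_act)

lemma tuple_act_inv_left:
  "g permutes {..<r} \<Longrightarrow> length t = r \<Longrightarrow> tuple_act r (inv g) (tuple_act r g t) = t"
  by (simp add: tuple_act_compose permutes_inv permutes_inv_o tuple_act_id)

lemma tuple_act_inv_right:
  "g permutes {..<r} \<Longrightarrow> length t = r \<Longrightarrow> tuple_act r g (tuple_act r (inv g) t) = t"
  by (simp add: tuple_act_compose permutes_inv_o tuple_act_id)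

lemma set_tuple_act:
  assumes g: "g permutes {..<r}" and "length t = r"
  shows "set (tuple_act r g t) = set t"
proof -
  have "set (tuple_act r g t) = (\<lambda>i. t ! i) ` g ` {..<r}" by (auto simp: tuple_act_def)
  also have "\<dots> = set t" using permutes_image[OF g] assms(2) by (auto simp: in_set_conv_nth)
  finally show ?thesis .
qed

lemma pr_sd_act: "j < r \<Longrightarrow> pr j (sd_act r g F) = pr (g j) F"
  by (auto simp: pr_def sd_act_def nth_tuple_act image_image)

lemma pr_mono: "F \<subseteq> F' \<Longrightarrow> pr j F \<subseteq> pr j F'"
  by (auto simp: pr_def)

lemma pr_eq_empty_iff [simp]: "pr j F = {} \<longleftrightarrow> F = {}"
  by (simp add: pr_def)

lemma proj_product_mono: "F \<subseteq> F' \<Longrightarrow> proj_product r F \<subseteq> proj_product r F'"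
  using pr_mono unfolding proj_product_def by blast

lemma proj_product_sd_act:
  assumes g: "g permutes {..<r}"
  shows "proj_product r (sd_act r g F) = sd_act r g (proj_product r F)"
proof (intro equalityI subsetI)
  fix x assume "x \<in> proj_product r (sd_act r g F)"
  then have x: "length x = r" "\<forall>j<r. x ! j \<in> pr (g j) F" by (auto simp: proj_product_def pr_sd_act)
  have "\<forall>i<r. tuple_act r (inv g) x ! i \<in> pr i F"
    using x(2) permutes_lessThan_less[OF permutes_inv[OF g]] permutes_inverses(1)[OF g]
    by (metis nth_tuple_act)
  then have "tuple_act r (inv g) x \<in> proj_product r F" by (simp add: proj_product_def)
  then show "x \<in> sd_act r g (proj_product r F)"
    unfolding sd_act_def using tuple_act_inv_right[OF g x(1)] by (metis image_eqI)
next
  fix x assume "x \<in> sd_act r g (proj_product r F)"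
  then obtain y where "y \<in> proj_product r F" "x = tuple_act r g y" by (auto simp: sd_act_def)
  then show "x \<in> proj_product r (sd_act r g F)"
    using permutes_lessThan_less[OF g] by (auto simp: proj_product_def pr_sd_act nth_tuple_act)
qed

lemma finite_edge_tuples: "finite V \<Longrightarrow> finite (edge_tuples r V E)"
  by (rule finite_subset[OF _ finite_lists_length_eq[of V r]]) (auto simp: edge_tuples_def)

lemma finite_B_edge: "finite V \<Longrightarrow> finite (B_edge r V E)"
  by (rule finite_subset[of _ "Pow (edge_tuples r V E)"]) (auto simp: B_edge_def finite_edge_tuples)

lemma subset_proj_product: "F \<in> B_edge r V E \<Longrightarrow> F \<subseteq> proj_product r F"
  using B_edgeD(3) by (fastforce simp: proj_product_def pr_def)

lemma pr_proj_product:
  assumes "F \<in> B_edge r V E" "j < r" shows "pr j (proj_product r F) = pr j F"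
proof
  show "pr j (proj_product r F) \<subseteq> pr j F" using assms(2) by (auto simp: pr_def proj_product_def)
  show "pr j F \<subseteq> pr j (proj_product r F)" using pr_mono[OF subset_proj_product[OF assms(1)]] .
qed

lemma proj_product_idem:
  assumes "F \<in> B_edge r V E" shows "proj_product r (proj_product r F) = proj_product r F"
proof -
  have "\<And>x. (\<forall>j<r. x ! j \<in> pr j (proj_product r F)) \<longleftrightarrow> (\<forall>j<r. x ! j \<in> pr j F)"
    using pr_proj_product[OF assms] by simp
  then show ?thesis unfolding proj_product_def[of r "proj_product r F"] by (simp only: proj_product_def)
qed

lemma pr_subset_vertices: "F \<in> B_edge r V E \<Longrightarrow> j < r \<Longrightarrow> pr j F \<subseteq> V"
  using B_edgeD(3) by (fastforce simp: pr_def)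

lemma proj_product_in_B_edge:
  assumes "finite V" and F: "F \<in> B_edge r V E"
  shows "proj_product r F \<in> B_edge r V E"
proof -
  have "set x \<subseteq> V" if "x \<in> proj_product r F" for x
    using that pr_subset_vertices[OF F] by (fastforce simp: proj_product_def in_set_conv_nth)
  then have sub: "proj_product r F \<subseteq> edge_tuples r V E"
    using B_edgeD(5)[OF F] by (auto simp: edge_tuples_def proj_product_def)
  then show ?thesis unfolding B_edge_iff
    using subset_proj_product[OF F] B_edgeD(1,4,5)[OF F] pr_proj_product[OF F] proj_product_idem[OF F]
      finite_subset[OF sub finite_edge_tuples[OF \<open>finite V\<close>]] by auto
qed

lemma sd_act_in_B_edge:
  assumes g: "g permutes {..<r}" and F: "F \<in> B_edge r V E"
  shows "sd_act r g F \<in> B_edge r V E"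
proof -
  have "sd_act r g F \<subseteq> edge_tuples r V E"
    using B_edgeD(3)[OF F] set_tuple_act[OF g] by (auto simp: sd_act_def edge_tuples_def)
  moreover have "pr j (sd_act r g F) \<inter> pr k (sd_act r g F) = {}" if "j < r" "k < r" "j \<noteq> k" for j k
    using that B_edgeD(4)[OF F] permutes_lessThan_less[OF g] permutes_inj[OF g]
    by (simp add: pr_sd_act inj_eq)
  moreover have "set x \<in> E" if x: "x \<in> proj_product r (sd_act r g F)" for x
  proof -
    have "x \<in> sd_act r g (proj_product r F)" using x by (simp add: proj_product_sd_act[OF g])
    then obtain y where y: "y \<in> proj_product r F" "x = tuple_act r g y" by (auto simp: sd_act_def)
    then have "set x = set y" using set_tuple_act[OF g, of y] by (simp add: proj_product_def)
    then show ?thesis using B_edgeD(5)[OF F y(1)] by simp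
  qed
  ultimately show ?thesis unfolding B_edge_iff using B_edgeD(1,2)[OF F] by (simp add: sd_act_def)
qed

text \<open>The coordinate projections of a simplex are nonempty and pairwise disjoint, so a permutation
  is determined by its effect on any single simplex.\<close>
lemma tuple_act_eq_if_sd_act_eq:
  assumes g: "g permutes {..<r}" and h: "h permutes {..<r}" and F: "F \<in> B_edge r V E"
    and eq: "sd_act r g F = sd_act r h F"
  shows "tuple_act r g = tuple_act r h"
proof -
  have "g j = h j" if "j < r" for j
  proof (rule ccontr)
    assume "g j \<noteq> h j"
    then have "pr (g j) F \<inter> pr (h j) F = {}"
      using B_edgeD(4)[OF F] permutes_lessThan_less g h that by blast
    moreover have "pr (g j) F = pr (h j) F" using pr_sd_act[OF that] eq by metis
    ultimately show False using B_edgeD(1)[OF F] by simp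
  qed
  then show ?thesis by (auto simp: tuple_act_def)
qed

lemma sd_act_inv:
  assumes g: "g permutes {..<r}" and F: "F \<in> B_edge r V E"
  shows "sd_act r (inv g) (sd_act r g F) = F"
proof -
  have "(\<lambda>t. tuple_act r (inv g) (tuple_act r g t)) ` F = (\<lambda>t. t) ` F"
    using B_edgeD(3)[OF F] tuple_act_inv_left[OF g] by (intro image_cong) auto
  then show ?thesis by (simp add: sd_act_def image_image)
qed

lemma sd_act_compose: "h permutes {..<r} \<Longrightarrow> sd_act r h (sd_act r g F) = sd_act r (g \<circ> h) F"
  by (simp add: sd_act_def image_image tuple_act_compose)

lemma sd_act_id:
  assumes F: "F \<in> B_edge r V E" shows "sd_act r id F = F"
proof -
  have "tuple_act r id ` F = (\<lambda>t. t) ` F"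
    using B_edgeD(3)[OF F] tuple_act_id by (intro image_cong) auto
  then show ?thesis by (simp add: sd_act_def)
qed

lemma B_edge_equivariant_closure:
  assumes "finite V"
  shows "equivariant_closure (B_edge r V E) (proj_product r) (sym_group r) (sd_act r)"
proof
  fix F F' :: "'a list set"
  assume "F \<subseteq> F'"
  then show "proj_product r F \<subseteq> proj_product r F'" by (rule proj_product_mono)
next
  fix g and F F' :: "'a list set"
  assume "F \<subseteq> F'"
  then show "sd_act r g F \<subseteq> sd_act r g F'" by (auto simp: sd_act_def)
next
  fix g h and F F' :: "'a list set"
  assume g: "g \<in> sym_group r" and h: "h \<in> sym_group r"
  then have g': "g permutes {..<r}" and h': "h permutes {..<r}" by (auto simp: sym_group_def)
  show "inj_on (sd_act r g) (B_edge r V E)"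
    using sd_act_inv[OF g'] by (rule inj_on_inverseI)
  show "\<exists>k\<in>sym_group r. \<forall>x\<in>B_edge r V E. sd_act r h (sd_act r g x) = sd_act r k x"
    using permutes_compose[OF h' g'] sd_act_compose[OF h'] by (auto simp: sym_group_def)
  show "\<exists>h\<in>sym_group r. \<forall>x\<in>B_edge r V E. sd_act r h (sd_act r g x) = x"
    using permutes_inv[OF g'] sd_act_inv[OF g'] by (intro bexI[of _ "inv g"]) (auto simp: sym_group_def)
  assume F: "F \<in> B_edge r V E"
  show "sd_act r g F \<in> B_edge r V E" using sd_act_in_B_edge[OF g' F] .
  show "proj_product r (sd_act r g F) = sd_act r g (proj_product r F)" using proj_product_sd_act[OF g'] .
  show "card (sd_act r g F) = card F"
    unfolding sd_act_def using B_edgeD(3)[OF F] tuple_act_inv_left[OF g']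
    by (intro card_image inj_on_inverseI[where g = "tuple_act r (inv g)"]) auto
  show "sd_act r g F = sd_act r h F \<Longrightarrow> \<forall>y\<in>B_edge r V E. sd_act r g y = sd_act r h y"
    using tuple_act_eq_if_sd_act_eq[OF g' h' F] unfolding sd_act_def by metis
next
  show "finite (B_edge r V E)" using finite_B_edge[OF assms] .
  have "id \<in> sym_group r" by (simp add: sym_group_def)
  then show "\<exists>e\<in>sym_group r. \<forall>F\<in>B_edge r V E. sd_act r e F = F" using sd_act_id by blast
  fix F assume F: "F \<in> B_edge r V E"
  show "finite F" using B_edgeD(2)[OF F] .
  show "proj_product r F \<in> B_edge r V E" using proj_product_in_B_edge[OF assms F] .
  show "F \<subseteq> proj_product r F" using subset_proj_product[OF F] .
  show "proj_product r (proj_product r F) = proj_product r F" using proj_product_idem[OF F] .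
qed

lemma P_KHD:
  assumes "\<phi> \<in> P_KH r V E"
  shows "length \<phi> = r" "\<And>j. j < r \<Longrightarrow> \<phi> ! j \<noteq> {}" "\<And>j. j < r \<Longrightarrow> \<phi> ! j \<subseteq> V"
    "\<And>x. x \<in> i_map r \<phi> \<Longrightarrow> distinct x \<and> set x \<in> E"
  using assms by (auto simp: P_KH_def i_map_def)

lemma i_map_witness:
  assumes "\<And>j. j < r \<Longrightarrow> \<phi> ! j \<noteq> {}" and "\<And>i. i \<in> I \<Longrightarrow> v \<in> \<phi> ! i"
  obtains x where "x \<in> i_map r \<phi>" "\<And>i. i \<in> I \<Longrightarrow> i < r \<Longrightarrow> x ! i = v"
proof
  let ?x = "map (\<lambda>i. if i \<in> I then v else SOME y. y \<in> \<phi> ! i) [0..<r]"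
  show "?x \<in> i_map r \<phi>"
    using assms by (auto simp: i_map_def some_in_eq)
  show "\<And>i. i \<in> I \<Longrightarrow> i < r \<Longrightarrow> ?x ! i = v" by simp
qed

lemma pr_i_map:
  assumes "\<And>j. j < r \<Longrightarrow> \<phi> ! j \<noteq> {}" and "j < r"
  shows "pr j (i_map r \<phi>) = \<phi> ! j"
proof
  show "pr j (i_map r \<phi>) \<subseteq> \<phi> ! j" using assms(2) by (auto simp: pr_def i_map_def)
  show "\<phi> ! j \<subseteq> pr j (i_map r \<phi>)"
  proof
    fix v assume "v \<in> \<phi> ! j"
    then obtain x where "x \<in> i_map r \<phi>" "x ! j = v"
      using i_map_witness[OF assms(1), where I = "{j}" and v = v] assms(2) by blast
    then show "v \<in> pr j (i_map r \<phi>)" by (auto simp: pr_def)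
  qed
qed

lemma proj_product_i_map:
  assumes "\<And>j. j < r \<Longrightarrow> \<phi> ! j \<noteq> {}"
  shows "proj_product r (i_map r \<phi>) = i_map r \<phi>"
proof -
  have "\<And>x. (\<forall>j<r. x ! j \<in> pr j (i_map r \<phi>)) \<longleftrightarrow> (\<forall>j<r. x ! j \<in> \<phi> ! j)"
    using pr_i_map[OF assms] by simp
  then show ?thesis unfolding proj_product_def by (simp only: i_map_def)
qed

lemma i_map_in_B_edge:
  assumes "finite V" and \<phi>: "\<phi> \<in> P_KH r V E"
  shows "i_map r \<phi> \<in> B_edge r V E"
proof -
  note \<phi>' = P_KHD[OF \<phi>]
  have sub: "i_map r \<phi> \<subseteq> edge_tuples r V E"
  proof
    fix x assume x: "x \<in> i_map r \<phi>"
    then have "length x = r" and x_in: "\<forall>j<r. x ! j \<in> \<phi> ! j" by (auto simp: i_map_def)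
    have "set x \<subseteq> V"
    proof
      fix v assume "v \<in> set x"
      then obtain i where "i < r" "v = x ! i" using \<open>length x = r\<close> by (auto simp: in_set_conv_nth)
      then show "v \<in> V" using x_in \<phi>'(3) by blast
    qed
    then show "x \<in> edge_tuples r V E" using \<phi>'(4)[OF x] \<open>length x = r\<close> by (simp add: edge_tuples_def)
  qed
  obtain x0 where "x0 \<in> i_map r \<phi>" by (rule i_map_witness[OF \<phi>'(2), where I = "{}"]) simp_all
  then have "i_map r \<phi> \<noteq> {}" by blast
  moreover have "\<phi> ! j \<inter> \<phi> ! k = {}" if jk: "j < r" "k < r" "j \<noteq> k" for j k
  proof (rule ccontr)
    assume "\<phi> ! j \<inter> \<phi> ! k \<noteq> {}"
    then obtain v where v: "v \<in> \<phi> ! j" "v \<in> \<phi> ! k" by blast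
    obtain x where "x \<in> i_map r \<phi>" "x ! j = v" "x ! k = v"
      by (rule i_map_witness[OF \<phi>'(2), where I = "{j, k}" and v = v]) (use v jk in auto)
    moreover have "length x = r" using \<open>x \<in> i_map r \<phi>\<close> by (simp add: i_map_def)
    ultimately show False using \<phi>'(4) nth_eq_iff_index_eq[of x j k] jk by simp
  qed
  moreover have "finite (i_map r \<phi>)" using finite_subset[OF sub finite_edge_tuples[OF assms(1)]] .
  moreover have "\<forall>j<r. pr j (i_map r \<phi>) = \<phi> ! j" using pr_i_map[of r \<phi>] \<phi>'(2) by blast
  moreover have "proj_product r (i_map r \<phi>) = i_map r \<phi>" using proj_product_i_map[of r \<phi>] \<phi>'(2) by blast
  ultimately show ?thesis unfolding B_edge_iff using sub \<phi>'(4) by simp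
qed

lemma proj_product_in_image_i_map:
  assumes F: "F \<in> B_edge r V E"
  shows "proj_product r F \<in> i_map r ` P_KH r V E"
proof
  let ?\<phi> = "map (\<lambda>j. pr j F) [0..<r]"
  show "proj_product r F = i_map r ?\<phi>" by (simp add: proj_product_def i_map_def)
  have "distinct x" if x: "x \<in> proj_product r F" for x
    unfolding distinct_conv_nth
  proof (intro allI impI)
    fix i j assume "i < length x" "j < length x" "i \<noteq> j"
    moreover have "length x = r" "\<forall>j<r. x ! j \<in> pr j F" using x by (auto simp: proj_product_def)
    ultimately show "x ! i \<noteq> x ! j" using B_edgeD(4)[OF F, of i j] by auto
  qed
  then show "?\<phi> \<in> P_KH r V E"
    using B_edgeD(1,5)[OF F] pr_subset_vertices[OF F] by (auto simp: P_KH_def proj_product_def)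
qed

lemma image_proj_product_B_edge:
  assumes "finite V" shows "proj_product r ` B_edge r V E = i_map r ` P_KH r V E"
proof
  show "proj_product r ` B_edge r V E \<subseteq> i_map r ` P_KH r V E"
    using proj_product_in_image_i_map by blast
  show "i_map r ` P_KH r V E \<subseteq> proj_product r ` B_edge r V E"
  proof
    fix F assume "F \<in> i_map r ` P_KH r V E"
    then obtain \<phi> where \<phi>: "\<phi> \<in> P_KH r V E" "F = i_map r \<phi>" by blast
    then have "F = proj_product r F" using proj_product_i_map[of r \<phi>] P_KHD(2)[OF \<phi>(1)] by simp
    then show "F \<in> proj_product r ` B_edge r V E" using i_map_in_B_edge[OF assms \<phi>(1)] \<phi>(2) by blast
  qed
qed

theorem mainTheorem5:
  fixes r :: nat and V :: "'a set" and E :: "'a set set"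
  assumes "finite V"
    and "\<forall>e\<in>E. e \<subseteq> V \<and> card e = r"
  shows "G_collapses (sym_group r) (sd_act r) (sd_B_edge r V E)
           (order_complex (i_map r ` P_KH r V E) (\<subseteq>))"
proof -
  interpret equivariant_closure "B_edge r V E" "proj_product r" "sym_group r" "sd_act r"
    using B_edge_equivariant_closure[OF assms(1)] .
  show ?thesis
    using collapses_onto_closed_chains by (simp add: sd_B_edge_def image_proj_product_B_edge[OF assms(1)])
qed

end
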